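(* Let $\eta,\lambda\in\mathbb{C}$ and let $v\in\mathcal{F}_{\eta,\lambda}$ be a singular vector that is not a multiple of $|\eta\rangle$. Define $\kappa(v)=\max\{k\in\mathbb{Z}:\alpha_kv\neq0\}$. Then: 1. $\kappa(v)>0$. 2. $\alpha_{\kappa(v)}v$ is again a (nonzero) singular vector. 3. If $v$ is homogeneous of grade $d$ and $\mathcal{F}_{\eta,\lambda}$ contains no proper singular vector of grade strictly between $0$ and $d$, then the coefficient of $\alpha_{-d}|\eta\rangle$ in the expansion of $v$ in the monomial basis is nonzero.
   Context: The Heisenberg modes satisfy $[\alpha_m,\alpha_n]=m\delta_{m,-n}$. $\mathcal{F}_{\eta,\lambda}$ is the Fock space generated by the vacuum $|\eta\rangle$ with $\alpha_n|\eta\rangle=0$ for $n>0$ and $\alpha_0|\eta\rangle=\eta|\eta\rangle$. It is graded by the monomial basis $\alpha_{-\sigma_1}\cdots\alpha_{-\sigma_j}|\eta\rangle$, which has grade $\sum_i\sigma_i$. $\mathcal{F}_{\eta,\lambda}$ is a Virasoro module via $$L_n=\tfrac12\sum_k:\alpha_k\alpha_{n-k}:-\lambda(n+1)\alpha_n,$$ where normal ordering places positive-index modes to the right. A singular vector is a nonzero $L_0$-eigenvector $v$ with $L_nv=0$ for all $n>0$. It is proper if it is not a multiple of $|\eta\rangle$. *)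

theory Defs
  imports Complex_Main "HOL-Library.Multiset" "HOL-Library.Groups_Big_Fun"
begin

text \<open>Model of the Fock space F_{eta,lambda}: a vector is a finitely supported
coefficient function on the monomial basis. The monomial
alpha_{-s1} ... alpha_{-sj} |eta> (all s_i >= 1) is indexed by the multiset {#s1,...,sj#};
the empty multiset indexes the vacuum |eta>.\<close>

type_synonym fvec = "nat multiset \<Rightarrow> complex"

definition fock :: "fvec \<Rightarrow> bool" where
  "fock v \<longleftrightarrow> finite {M. v M \<noteq> 0} \<and> (\<forall>M. v M \<noteq> 0 \<longrightarrow> 0 \<notin># M)"

definition vac :: fvec where
  "vac = (\<lambda>M. if M = {#} then 1 else 0)"

text \<open>Heisenberg modes: alpha_{-n} (n>0) creates, alpha_n (n>0) acts as n d/dx_n,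
alpha_0 acts as eta.\<close>
definition alpha :: "complex \<Rightarrow> int \<Rightarrow> fvec \<Rightarrow> fvec" where
  "alpha eta k v =
     (if k > 0 then (\<lambda>M. of_int k * of_nat (count M (nat k) + 1) * v (M + {#nat k#}))
      else if k = 0 then (\<lambda>M. eta * v M)
      else (\<lambda>M. if nat (- k) \<in># M then v (M - {#nat (- k)#}) else 0))"

definition nord :: "complex \<Rightarrow> int \<Rightarrow> int \<Rightarrow> fvec \<Rightarrow> fvec" where
  "nord eta a b v = alpha eta (min a b) (alpha eta (max a b) v)"

text \<open>Virasoro action L_n = 1/2 sum_k :alpha_k alpha_{n-k}: - lambda (n+1) alpha_n;
the sum is finite on Fock vectors (Sum_any sums over the finitely many nonzero terms).\<close>
definition Lvir :: "complex \<Rightarrow> complex \<Rightarrow> int \<Rightarrow> fvec \<Rightarrow> fvec" where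
  "Lvir eta lam n v = (\<lambda>M. (1/2) * Sum_any (\<lambda>k. nord eta k (n - k) v M)
                            - lam * of_int (n + 1) * alpha eta n v M)"

definition singular :: "complex \<Rightarrow> complex \<Rightarrow> fvec \<Rightarrow> bool" where
  "singular eta lam v \<longleftrightarrow> v \<noteq> (\<lambda>_. 0) \<and> (\<exists>h. Lvir eta lam 0 v = (\<lambda>M. h * v M))
     \<and> (\<forall>n::int. n > 0 \<longrightarrow> Lvir eta lam n v = (\<lambda>_. 0))"

definition proper :: "fvec \<Rightarrow> bool" where
  "proper v \<longleftrightarrow> \<not> (\<exists>c. v = (\<lambda>M. c * vac M))"

definition homogeneous :: "nat \<Rightarrow> fvec \<Rightarrow> bool" where
  "homogeneous d v \<longleftrightarrow> (\<forall>M. v M \<noteq> 0 \<longrightarrow> sum_mset M = d)"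

definition kappa :: "complex \<Rightarrow> fvec \<Rightarrow> int" where
  "kappa eta v = (GREATEST k. alpha eta k v \<noteq> (\<lambda>_. 0))"

end

theory Submission
  imports Defs
begin

text \<open>For m > 0 and n \<ge> 0 the Heisenberg relations give [L_n, alpha_m] = -m alpha_(n+m).
If kappa is the largest mode with alpha_kappa v \<noteq> 0, then alpha_(n+kappa) v = 0 for n > 0, so
alpha_kappa v is again annihilated by every L_n with n > 0, and it is an L_0 eigenvector whose
eigenvalue is lowered by kappa. A proper Fock vector contains some creation mode alpha_(-x), which
alpha_x detects, so kappa > 0. Finally alpha_kappa v has grade d - kappa; minimality of d forces
it to be a multiple of the vacuum, i.e. kappa = d and v has a nonzero coefficient on
alpha_(-d)|eta>.\<close>

lemma alpha_pos:
  "k > 0 \<Longrightarrow> alpha eta k v M = of_int k * of_nat (count M (nat k) + 1) * v (M + {#nat k#})"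
  by (simp add: alpha_def)

lemma alpha_zero: "alpha eta 0 v M = eta * v M"
  by (simp add: alpha_def)

lemma alpha_neg:
  "k < 0 \<Longrightarrow> alpha eta k v M = (if nat (- k) \<in># M then v (M - {#nat (- k)#}) else 0)"
  by (simp add: alpha_def)

lemma alpha_zero_vector: "alpha eta k (\<lambda>_. 0) = (\<lambda>_. 0)"
  by (auto simp: alpha_def)

lemma alpha_scale: "alpha eta k (\<lambda>M. c * f M) M = c * alpha eta k f M"
  by (auto simp: alpha_def algebra_simps)

lemma alpha_diff: "alpha eta k (\<lambda>M. f M - g M) M = alpha eta k f M - alpha eta k g M"
  by (auto simp: alpha_def algebra_simps)

lemma alpha_sum: "alpha eta k (\<lambda>M. \<Sum>j\<in>S. f j M) M = (\<Sum>j\<in>S. alpha eta k (f j) M)"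
  by (auto simp: alpha_def sum_distrib_left)

subsection \<open>Heisenberg relations\<close>

lemma alpha_commute_pos:
  assumes "a > 0" "b > 0"
  shows "alpha eta a (alpha eta b w) M = alpha eta b (alpha eta a w) M"
proof -
  obtain i j where ij: "a = int i" "b = int j" "i > 0" "j > 0"
    using assms by (intro that[of "nat a" "nat b"]) auto
  have "M + {#j#} + {#i#} = M + {#i#} + {#j#}" by simp
  then show ?thesis using ij
    by (cases "i = j") (simp_all add: alpha_pos add_mset_commute algebra_simps)
qed

lemma alpha_commute_neg:
  assumes "a < 0" "b < 0"
  shows "alpha eta a (alpha eta b w) M = alpha eta b (alpha eta a w) M"
proof -
  obtain i j where ij: "a = - int i" "b = - int j" "i > 0" "j > 0"
    using assms by (intro that[of "nat (-a)" "nat (-b)"]) auto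
  show ?thesis
  proof (cases "i = j")
    case False
    then have "j \<in># M - {#i#} \<longleftrightarrow> j \<in># M" "i \<in># M - {#j#} \<longleftrightarrow> i \<in># M"
      by (simp_all add: in_diff_count)
    moreover have "M - {#i#} - {#j#} = M - {#j#} - {#i#}" by (rule diff_right_commute)
    ultimately show ?thesis using ij by (simp add: alpha_neg add_mset_commute)
  qed (use ij in simp)
qed

lemma alpha_commutator_pos_neg:
  assumes "a > 0" "b < 0"
  shows "alpha eta a (alpha eta b w) M
           = alpha eta b (alpha eta a w) M + (if a + b = 0 then of_int a * w M else 0)"
proof -
  obtain i j where ij: "a = int i" "b = - int j" "i > 0" "j > 0"
    using assms by (intro that[of "nat a" "nat (-b)"]) auto
  show ?thesis
  proof (cases "i = j")
    case True
    then show ?thesis using ij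
      by (cases "i \<in># M") (auto simp: alpha_pos alpha_neg algebra_simps)
  next
    case False
    then have "j \<in># M \<Longrightarrow> M + {#i#} - {#j#} = M - {#j#} + {#i#}"
      by (simp add: multiset_eq_iff)
    with False ij show ?thesis by (simp add: alpha_pos alpha_neg)
  qed
qed

lemma alpha_commutator:
  "alpha eta a (alpha eta b w) M
     = alpha eta b (alpha eta a w) M + (if a + b = 0 then of_int a * w M else 0)"
proof -
  consider "a = 0" | "b = 0" | "a > 0" "b > 0" | "a < 0" "b < 0" | "a > 0" "b < 0" | "a < 0" "b > 0"
    by linarith
  then show ?thesis
  proof cases
    case 3
    then show ?thesis by (simp add: alpha_commute_pos)
  next
    case 4
    then show ?thesis by (simp add: alpha_commute_neg)
  next
    case 5
    then show ?thesis by (rule alpha_commutator_pos_neg)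
  next
    case 6
    then show ?thesis using alpha_commutator_pos_neg[of b a eta w M]
      by (cases "a + b = 0") (auto simp: algebra_simps add_eq_0_iff)
  qed (simp_all add: alpha_zero alpha_def)
qed

subsection \<open>Finiteness of the Virasoro sums\<close>

definition modes_bounded :: "int \<Rightarrow> fvec \<Rightarrow> bool" where
  "modes_bounded B w \<longleftrightarrow> (\<forall>M. w M \<noteq> 0 \<longrightarrow> (\<forall>x\<in>#M. int x \<le> B))"

lemma member_le_sum_mset: "x \<in># M \<Longrightarrow> x \<le> sum_mset (M :: nat multiset)"
  by (auto dest!: multi_member_split)

lemma fock_modes_bounded:
  assumes "fock v"
  obtains B where "modes_bounded B v" "0 \<le> B"
proof
  let ?S = "{M. v M \<noteq> 0}"
  have "finite ?S" using assms by (simp add: fock_def)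
  show "modes_bounded (int (\<Sum>M\<in>?S. sum_mset M)) v"
    unfolding modes_bounded_def
  proof (intro allI impI ballI)
    fix M x assume "v M \<noteq> 0" "x \<in># M"
    then have "x \<le> sum_mset M" by (intro member_le_sum_mset)
    also have "\<dots> \<le> (\<Sum>M\<in>?S. sum_mset M)"
      using \<open>finite ?S\<close> \<open>v M \<noteq> 0\<close> by (intro member_le_sum) auto
    finally show "int x \<le> int (\<Sum>M\<in>?S. sum_mset M)" by (simp only: of_nat_le_iff)
  qed
qed (rule of_nat_0_le_iff)

lemma modes_bounded_mono: "modes_bounded B w \<Longrightarrow> B \<le> C \<Longrightarrow> modes_bounded C w"
  unfolding modes_bounded_def by force

lemma modes_bounded_alpha:
  assumes "modes_bounded B w" "m > 0"
  shows "modes_bounded B (alpha eta m w)"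
  using assms unfolding modes_bounded_def by (auto simp: alpha_pos)

lemma alpha_above_bound:
  assumes "modes_bounded B w" "0 \<le> B" "j > B"
  shows "alpha eta j w = (\<lambda>_. 0)"
proof
  fix M
  have "nat j \<in># M + {#nat j#}" "int (nat j) > B" using assms by simp_all
  then have "w (M + {#nat j#}) = 0" using assms(1) unfolding modes_bounded_def by force
  then show "alpha eta j w M = 0" using assms by (simp add: alpha_pos)
qed

lemma Lvir_eq_finite_sum:
  assumes "modes_bounded B w" "0 \<le> B"
  shows "Lvir eta lam n w = (\<lambda>M. 1/2 * (\<Sum>k\<in>{n-B..B}. nord eta k (n-k) w M)
                                  - lam * of_int (n+1) * alpha eta n w M)"
proof -
  have "{k. nord eta k (n-k) w M \<noteq> 0} \<subseteq> {n-B..B}" for M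
  proof
    fix k assume "k \<in> {k. nord eta k (n-k) w M \<noteq> 0}"
    then have "max k (n-k) \<le> B"
      using alpha_above_bound[OF assms, of "max k (n-k)"]
      by (cases "max k (n-k) \<le> B") (auto simp: nord_def alpha_zero_vector)
    then show "k \<in> {n-B..B}" by simp
  qed
  then have "Sum_any (\<lambda>k. nord eta k (n-k) w M) = (\<Sum>k\<in>{n-B..B}. nord eta k (n-k) w M)" for M
    by (intro Sum_any.expand_superset) auto
  then show ?thesis by (simp add: Lvir_def)
qed

subsection \<open>The commutator of L_n with an annihilation mode\<close>

lemma nord_alpha_commutator:
  assumes "m > 0" "n \<ge> 0"
  shows "nord eta k (n-k) (alpha eta m w) M = alpha eta m (nord eta k (n-k) w) M
           + (if min k (n-k) = -m then - of_int m * alpha eta (n+m) w M else 0)"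
proof -
  define lo hi where "lo = min k (n-k)" and "hi = max k (n-k)"
  have lh: "lo + hi = n" "hi \<ge> 0" using assms unfolding lo_def hi_def by auto
  have "alpha eta hi (alpha eta m w) = alpha eta m (alpha eta hi w)"
    using alpha_commutator[of eta hi m w] lh assms by auto
  then have "nord eta k (n-k) (alpha eta m w) M = alpha eta lo (alpha eta m (alpha eta hi w)) M"
    by (simp add: nord_def lo_def hi_def)
  also have "\<dots> = alpha eta m (alpha eta lo (alpha eta hi w)) M
                   + (if lo + m = 0 then of_int lo * alpha eta hi w M else 0)"
    by (rule alpha_commutator)
  also have "\<dots> = alpha eta m (nord eta k (n-k) w) M
                   + (if min k (n-k) = -m then - of_int m * alpha eta (n+m) w M else 0)"
  proof (cases "lo = -m")
    case True
    then have "hi = n + m" using lh by simp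
    with True show ?thesis by (simp add: nord_def lo_def hi_def)
  next
    case False
    then show ?thesis by (simp add: nord_def lo_def[symmetric] hi_def[symmetric] algebra_simps)
  qed
  finally show ?thesis .
qed

lemma normal_order_terms_with_mode:
  fixes m n B :: int
  assumes "m > 0" "n \<ge> 0" "n + m \<le> B"
  shows "{k \<in> {n-B..B}. min k (n-k) = -m} = {-m, n+m}"
  using assms by (auto simp: min_def)

lemma Lvir_alpha_commutator:
  assumes "m > 0" "n \<ge> 0" "modes_bounded B w" "0 \<le> B" "n + m \<le> B"
  shows "Lvir eta lam n (alpha eta m w) M
           = alpha eta m (Lvir eta lam n w) M - of_int m * alpha eta (n+m) w M"
proof -
  let ?c = "- of_int m * alpha eta (n+m) w M"
  have "(\<Sum>k\<in>{n-B..B}. if min k (n-k) = -m then ?c else 0) = (\<Sum>k\<in>{-m, n+m}. ?c)"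
    unfolding normal_order_terms_with_mode[OF assms(1,2,5), symmetric]
      sum.inter_filter[OF finite_atLeastAtMost_int] ..
  also have "\<dots> = 2 * ?c" using assms(1,2) by simp
  finally have crossing: "(\<Sum>k\<in>{n-B..B}. if min k (n-k) = -m then ?c else 0) = 2 * ?c" .
  have "alpha eta n (alpha eta m w) M = alpha eta m (alpha eta n w) M"
    using alpha_commutator[of eta n m w M] assms by simp
  then have "Lvir eta lam n (alpha eta m w) M
      = 1/2 * (\<Sum>k\<in>{n-B..B}. alpha eta m (nord eta k (n-k) w) M
                 + (if min k (n-k) = -m then ?c else 0))
        - lam * of_int (n+1) * alpha eta m (alpha eta n w) M"
    unfolding Lvir_eq_finite_sum[OF modes_bounded_alpha[OF assms(3,1)] assms(4)]
    using assms(1,2) by (simp add: nord_alpha_commutator)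
  also have "\<dots> = 1/2 * (\<Sum>k\<in>{n-B..B}. alpha eta m (nord eta k (n-k) w) M)
        - lam * of_int (n+1) * alpha eta m (alpha eta n w) M - of_int m * alpha eta (n+m) w M"
    by (simp add: sum.distrib crossing algebra_simps)
  also have "\<dots> = alpha eta m (Lvir eta lam n w) M - of_int m * alpha eta (n+m) w M"
    unfolding Lvir_eq_finite_sum[OF assms(3,4)] by (simp only: alpha_diff alpha_scale alpha_sum)
  finally show ?thesis .
qed

lemma singular_alpha_top_mode:
  assumes "fock v" "singular eta lam v" "m > 0"
    and "alpha eta m v \<noteq> (\<lambda>_. 0)" "\<And>j. j > m \<Longrightarrow> alpha eta j v = (\<lambda>_. 0)"
  shows "singular eta lam (alpha eta m v)"
proof -
  obtain h where h: "Lvir eta lam 0 v = (\<lambda>M. h * v M)"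
    using assms(2) unfolding singular_def by blast
  have annihilated: "\<And>n. n > 0 \<Longrightarrow> Lvir eta lam n v = (\<lambda>_. 0)"
    using assms(2) unfolding singular_def by blast
  obtain B where B: "modes_bounded B v" "0 \<le> B" using fock_modes_bounded assms(1) by blast
  have commute: "Lvir eta lam n (alpha eta m v) M
                   = alpha eta m (Lvir eta lam n v) M - of_int m * alpha eta (n+m) v M"
    if "n \<ge> 0" for n M
    using Lvir_alpha_commutator[OF assms(3) that modes_bounded_mono[OF B(1), of "max B (n+m)"]] B(2)
    by simp
  have "Lvir eta lam 0 (alpha eta m v) = (\<lambda>M. (h - of_int m) * alpha eta m v M)"
  proof
    fix M show "Lvir eta lam 0 (alpha eta m v) M = (h - of_int m) * alpha eta m v M"
      using commute[of 0 M] by (simp add: h alpha_scale algebra_simps)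
  qed
  moreover have "Lvir eta lam n (alpha eta m v) = (\<lambda>_. 0)" if "n > 0" for n
    using commute[of n] that assms(5)[of "n+m"] by (simp add: annihilated alpha_zero_vector fun_eq_iff)
  ultimately show ?thesis using assms(4) unfolding singular_def by blast
qed

lemma fock_alpha:
  assumes "fock v" "k > 0"
  shows "fock (alpha eta k v)"
proof -
  have "{M. alpha eta k v M \<noteq> 0} \<subseteq> (\<lambda>N. N - {#nat k#}) ` {M. v M \<noteq> 0}"
    using assms(2) by (auto simp: alpha_pos intro!: image_eqI[where x = "_ + {#nat k#}"])
  with assms show ?thesis
    unfolding fock_def by (auto simp: alpha_pos intro: finite_subset)
qed

lemma alpha_nonzero_if_mode_occurs:
  assumes "v M \<noteq> 0" "x \<in># M" "x > 0"
  shows "alpha eta (int x) v \<noteq> (\<lambda>_. 0)"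
proof
  assume "alpha eta (int x) v = (\<lambda>_. 0)"
  then have "alpha eta (int x) v (M - {#x#}) = 0" by simp
  moreover have "M - {#x#} + {#x#} = M" "count M x > 0" using assms(2) by simp_all
  ultimately show False using assms by (simp add: alpha_pos)
qed

lemma proper_fock_has_positive_mode:
  assumes "fock v" "proper v"
  obtains x where "x > 0" "alpha eta (int x) v \<noteq> (\<lambda>_. 0)"
proof -
  obtain M where M: "v M \<noteq> 0" "M \<noteq> {#}"
  proof (rule ccontr)
    assume "\<not> thesis"
    with that have "v = (\<lambda>M. v {#} * vac M)" unfolding vac_def by (intro ext) auto
    with assms(2) show False unfolding proper_def by blast
  qed
  then obtain x where x: "x \<in># M" by (meson multiset_nonemptyE)
  moreover have "0 \<notin># M" using assms(1) M(1) unfolding fock_def by blast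
  ultimately have "x > 0" by (metis gr0I)
  with that show ?thesis using alpha_nonzero_if_mode_occurs[of v M x eta] M(1) x by blast
qed

lemma Greatest_int_bounded:
  fixes P :: "int \<Rightarrow> bool"
  assumes "P x" "\<And>y. P y \<Longrightarrow> y \<le> b"
  shows "P (Greatest P)" "\<And>y. P y \<Longrightarrow> y \<le> Greatest P"
proof -
  let ?K = "{y. P y \<and> x \<le> y}"
  have "finite ?K" using assms(2) by (auto intro: finite_subset[of _ "{x..b}"])
  moreover have "x \<in> ?K" using assms(1) by simp
  ultimately have max_in: "Max ?K \<in> ?K" by (intro Max_in) auto
  have max_ge: "y \<le> Max ?K" if "P y" for y
  proof (cases "x \<le> y")
    case True
    with that \<open>finite ?K\<close> show ?thesis by (intro Max_ge) auto
  next
    case False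
    with max_in show ?thesis by simp
  qed
  have "Greatest P = Max ?K"
    using max_in max_ge by (intro Greatest_equality) auto
  then show "P (Greatest P)" "\<And>y. P y \<Longrightarrow> y \<le> Greatest P"
    using max_in max_ge by auto
qed

lemma kappa_top_mode:
  assumes "fock v" "proper v"
  shows "kappa eta v > 0" "alpha eta (kappa eta v) v \<noteq> (\<lambda>_. 0)"
    "\<And>j. j > kappa eta v \<Longrightarrow> alpha eta j v = (\<lambda>_. 0)"
proof -
  obtain B where B: "modes_bounded B v" "0 \<le> B" using fock_modes_bounded assms(1) by blast
  obtain x where x: "x > 0" "alpha eta (int x) v \<noteq> (\<lambda>_. 0)"
    using proper_fock_has_positive_mode[OF assms] by blast
  have bounded: "\<And>y. alpha eta y v \<noteq> (\<lambda>_. 0) \<Longrightarrow> y \<le> B"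
    using alpha_above_bound[OF B] by (meson not_le)
  show "alpha eta (kappa eta v) v \<noteq> (\<lambda>_. 0)"
    unfolding kappa_def using x(2) bounded by (rule Greatest_int_bounded(1))
  have kappa_ge: "y \<le> kappa eta v" if "alpha eta y v \<noteq> (\<lambda>_. 0)" for y
    unfolding kappa_def using x(2) bounded that by (rule Greatest_int_bounded(2))
  show "kappa eta v > 0" using kappa_ge[OF x(2)] x(1) by simp
  show "\<And>j. j > kappa eta v \<Longrightarrow> alpha eta j v = (\<lambda>_. 0)" using kappa_ge by force
qed

lemma homogeneous_alpha_support:
  assumes "homogeneous d v" "k > 0" "alpha eta k v M \<noteq> 0"
  shows "sum_mset M + nat k = d"
  using assms unfolding homogeneous_def by (force simp: alpha_pos)

lemma fock_grade_zero_support: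
  assumes "fock w" "w M \<noteq> 0" "sum_mset M = 0"
  shows "M = {#}"
  using assms unfolding fock_def by (metis multiset_nonemptyE sum_mset_0_iff)

lemma proper_if_nonvacuum_support: "w M \<noteq> 0 \<Longrightarrow> M \<noteq> {#} \<Longrightarrow> proper w"
  unfolding proper_def vac_def by auto

lemma single_mode_coefficient_nonzero:
  assumes "fock v" "homogeneous d v" "m > 0" "singular eta lam (alpha eta m v)"
    and no_lower: "\<forall>w. fock w \<and> singular eta lam w \<and> proper w \<longrightarrow>
                     \<not> (\<exists>e::nat. 0 < e \<and> e < d \<and> homogeneous e w)"
  shows "v {#d#} \<noteq> 0"
proof -
  let ?w = "alpha eta m v"
  obtain M where M: "?w M \<noteq> 0" using assms(4) unfolding singular_def by blast
  have grade: "sum_mset N + nat m = d" if "?w N \<noteq> 0" for N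
    using homogeneous_alpha_support[OF assms(2,3) that] .
  have "sum_mset M = 0"
  proof (rule ccontr)
    assume "sum_mset M \<noteq> 0"
    then have "proper ?w" using M proper_if_nonvacuum_support by fastforce
    moreover have "homogeneous (sum_mset M) ?w"
      unfolding homogeneous_def using grade[OF M] grade by (metis add_right_cancel)
    moreover have "sum_mset M < d" using grade[OF M] assms(3) by simp
    ultimately show False
      using no_lower fock_alpha[OF assms(1,3)] assms(4) \<open>sum_mset M \<noteq> 0\<close> by blast
  qed
  then have "M = {#}" using fock_grade_zero_support[OF fock_alpha[OF assms(1,3)] M] by simp
  then show ?thesis using M grade[OF M] assms(3) by (simp add: alpha_pos)
qed

theorem mainTheorem5:
  fixes eta lam :: complex and v :: fvec
  assumes "fock v" and "singular eta lam v" and "proper v"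
  shows "kappa eta v > 0
    \<and> singular eta lam (alpha eta (kappa eta v) v)
    \<and> (\<forall>d::nat. homogeneous d v \<longrightarrow>
          (\<forall>w. fock w \<and> singular eta lam w \<and> proper w \<longrightarrow>
               \<not> (\<exists>e::nat. 0 < e \<and> e < d \<and> homogeneous e w)) \<longrightarrow>
          v {#d#} \<noteq> 0)"
proof -
  note kappa = kappa_top_mode[OF assms(1,3), of eta]
  have singular: "singular eta lam (alpha eta (kappa eta v) v)"
    using singular_alpha_top_mode[OF assms(1,2) kappa] .
  show ?thesis
  proof (intro conjI allI impI)
    fix d :: nat
    assume "homogeneous d v" and "\<forall>w. fock w \<and> singular eta lam w \<and> proper w \<longrightarrow>
               \<not> (\<exists>e::nat. 0 < e \<and> e < d \<and> homogeneous e w)"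
    then show "v {#d#} \<noteq> 0"
      by (rule single_mode_coefficient_nonzero[OF assms(1) _ kappa(1) singular])
  qed (use kappa(1) singular in auto)
qed

end
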